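(* Let $q > r \ge 1$ be integers. If $S_1$ and $S_2$ are $K_q^r$-cliques such that $S_1 \cap S_2 = \{e\}$ for some $r$-edge $e$, then there exists an independent $K_q^r$-hinge for $S_1$ and $S_2$.
   Context: An $r$-graph is identified with its edge set; $V(G)$ denotes its vertex set. $K_q^r$ is the complete $r$-graph on $q$ vertices, and a $K_q^r$-clique is an $r$-graph isomorphic to $K_q^r$. A $K_q^r$-decomposition of an $r$-graph $G$ is a partition of the edges of $G$ into $K_q^r$-cliques. A vertex set $X$ is independent in an $r$-graph $H$ if no edge of $H$ is contained in $X$. Given two $K_q^r$-cliques $S, S'$ with $S \cap S' = \{e\}$ for an $r$-edge $e$, a $K_q^r$-hinge for $S$ and $S'$ is an $r$-graph $H$ that is edge-disjoint from $S \cup S'$ such that $H \cup (S \setminus \{e\})$ has a $K_q^r$-decomposition and $H \cup (S' \setminus \{e\})$ has a $K_q^r$-decomposition. The hinge is independent if $V(S) \cup V(S')$ is independent in $H$. *)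

theory Defs
  imports Main
begin

text \<open>An r-graph is identified with its (finite) set of edges, each edge an r-subset of vertices.\<close>
definition r_graph :: "nat \<Rightarrow> 'a set set \<Rightarrow> bool" where
  "r_graph r G \<longleftrightarrow> finite G \<and> (\<forall>f\<in>G. finite f \<and> card f = r)"

definition vertices :: "'a set set \<Rightarrow> 'a set" where
  "vertices G = \<Union>G"

definition complete_rgraph :: "nat \<Rightarrow> 'a set \<Rightarrow> 'a set set" where
  "complete_rgraph r V = {f. f \<subseteq> V \<and> card f = r}"

definition is_clique :: "nat \<Rightarrow> nat \<Rightarrow> 'a set set \<Rightarrow> bool" where
  "is_clique q r S \<longleftrightarrow> (\<exists>V. finite V \<and> card V = q \<and> S = complete_rgraph r V)"

definition has_decomposition :: "nat \<Rightarrow> nat \<Rightarrow> 'a set set \<Rightarrow> bool" where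
  "has_decomposition q r G \<longleftrightarrow>
     (\<exists>D. (\<forall>S\<in>D. is_clique q r S) \<and> pairwise disjnt D \<and> \<Union>D = G)"

definition is_hinge :: "nat \<Rightarrow> nat \<Rightarrow> 'a set set \<Rightarrow> 'a set set \<Rightarrow> 'a set \<Rightarrow> 'a set set \<Rightarrow> bool" where
  "is_hinge q r S S' e H \<longleftrightarrow>
     r_graph r H \<and> H \<inter> (S \<union> S') = {} \<and>
     has_decomposition q r (H \<union> (S - {e})) \<and>
     has_decomposition q r (H \<union> (S' - {e}))"

definition independent_in :: "'a set \<Rightarrow> 'a set set \<Rightarrow> bool" where
  "independent_in X H \<longleftrightarrow> (\<forall>f\<in>H. \<not> f \<subseteq> X)"

end

(*
  Fix a prime p >= q and consider the grid {..<q} x Z_p. For a shift t, the graphs of the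
  functions j |-> c(j) + t(j), with c ranging over the polynomials of degree < r over Z_p, are
  q-sets whose complete r-graphs partition the r-sets meeting each column at most once: by
  Lagrange interpolation such an r-set lies on exactly one of these graphs. For the shifts 0
  and [r <= j] the graphs of c = 0 share exactly r points, so the remaining partial transversals
  form a hinge for the two corresponding cliques. Embedding the grid gives a hinge for any two
  q-cliques meeting in one edge e whose other vertices are all fresh.

  Such a hinge may still contain edges inside the two given cliques' vertex sets. To remove
  them, pass through an auxiliary clique on e plus q - r fresh vertices U: hinges H1 for
  (V1, U) and H2 for (U, V2) combine to the independent hinge H1 + (K(U) - e) + H2.
*)

theory Submission
  imports
    Defs
    "HOL-Computational_Algebra.Primes"
    "HOL-Computational_Algebra.Polynomial"
    "HOL-Library.FuncSet"
    "HOL-Library.Disjoint_Sets"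
begin

section \<open>Complete r-graphs and decompositions\<close>

definition decomposes :: "nat \<Rightarrow> nat \<Rightarrow> 'a set set set \<Rightarrow> 'a set set \<Rightarrow> bool" where
  "decomposes q r \<D> G \<longleftrightarrow> (\<forall>S\<in>\<D>. is_clique q r S) \<and> pairwise disjnt \<D> \<and> \<Union>\<D> = G"

lemma has_decomposition_iff: "has_decomposition q r G \<longleftrightarrow> (\<exists>\<D>. decomposes q r \<D> G)"
  unfolding has_decomposition_def decomposes_def ..

lemma mem_complete_rgraph_iff: "f \<in> complete_rgraph r X \<longleftrightarrow> f \<subseteq> X \<and> card f = r"
  unfolding complete_rgraph_def by simp

lemma subset_vertices: "f \<in> G \<Longrightarrow> f \<subseteq> vertices G"
  unfolding vertices_def by blast

lemma independent_in_subset: "independent_in X H \<Longrightarrow> Y \<subseteq> X \<Longrightarrow> independent_in Y H"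
  unfolding independent_in_def by blast

lemma independent_in_disjoint:
  "independent_in (vertices S \<union> vertices S') H \<Longrightarrow> H \<inter> (S \<union> S') = {}"
  unfolding independent_in_def vertices_def by blast

lemma complete_rgraph_Int:
  "complete_rgraph r (X \<inter> Y) = complete_rgraph r X \<inter> complete_rgraph r Y"
  unfolding complete_rgraph_def by auto

lemma complete_rgraph_card_eq: "finite X \<Longrightarrow> card X = r \<Longrightarrow> complete_rgraph r X = {X}"
  unfolding complete_rgraph_def using card_subset_eq by auto

lemma complete_rgraph_image:
  assumes "inj_on \<phi> V"
  shows "complete_rgraph r (\<phi> ` V) = image \<phi> ` complete_rgraph r V"
proof
  show "complete_rgraph r (\<phi> ` V) \<subseteq> image \<phi> ` complete_rgraph r V"
  proof
    fix g assume "g \<in> complete_rgraph r (\<phi> ` V)"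
    then obtain f where "f \<subseteq> V" "g = \<phi> ` f" "card g = r"
      unfolding complete_rgraph_def by (auto simp: subset_image_iff)
    moreover have "card (\<phi> ` f) = card f"
      using \<open>f \<subseteq> V\<close> assms by (blast intro: card_image inj_on_subset)
    ultimately show "g \<in> image \<phi> ` complete_rgraph r V"
      unfolding complete_rgraph_def by auto
  qed
  show "image \<phi> ` complete_rgraph r V \<subseteq> complete_rgraph r (\<phi> ` V)"
    using assms unfolding complete_rgraph_def
    by (auto simp: card_image dest: inj_on_subset)
qed

lemma vertices_complete_rgraph_subset: "vertices (complete_rgraph r V) \<subseteq> V"
  unfolding vertices_def complete_rgraph_def by auto

lemma vertices_complete_rgraph:
  assumes "finite V" "0 < r" "r \<le> card V"
  shows "vertices (complete_rgraph r V) = V"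
proof
  show "V \<subseteq> vertices (complete_rgraph r V)"
  proof
    fix x assume "x \<in> V"
    then have "r - 1 \<le> card (V - {x})" using assms by simp
    then obtain B where B: "B \<subseteq> V - {x}" "card B = r - 1" "finite B"
      by (rule obtain_subset_with_card_n)
    moreover have "x \<notin> B" using B(1) by blast
    ultimately have "insert x B \<in> complete_rgraph r V"
      using \<open>x \<in> V\<close> assms(2) unfolding complete_rgraph_def by auto
    then show "x \<in> vertices (complete_rgraph r V)"
      unfolding vertices_def by blast
  qed
qed (rule vertices_complete_rgraph_subset)

lemma complete_rgraph_eq_singleton:
  assumes "finite X" "0 < r" "complete_rgraph r X = {e}"
  shows "X = e" "card e = r"
proof -
  have "e \<subseteq> X" "card e = r"
    using assms(3) unfolding complete_rgraph_def by auto
  then have "r \<le> card X" using card_mono[OF assms(1)] by metis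
  then have "X = vertices (complete_rgraph r X)"
    using assms(1,2) by (simp add: vertices_complete_rgraph)
  then show "X = e" using assms(3) by (simp add: vertices_def)
  show "card e = r" by fact
qed

lemma r_graph_complete_rgraph: "finite V \<Longrightarrow> r_graph r (complete_rgraph r V)"
  unfolding r_graph_def complete_rgraph_def by (auto intro: finite_subset)

lemma r_graph_finite_vertices: "r_graph r G \<Longrightarrow> finite (vertices G)"
  unfolding r_graph_def vertices_def by blast

lemma decomposes_Diff:
  assumes "decomposes q r \<D> G" "S \<in> \<D>"
  shows "decomposes q r (\<D> - {S}) (G - S)"
proof -
  have "\<Union>(\<D> - {S}) = \<Union>\<D> - S"
    using assms unfolding decomposes_def pairwise_def disjnt_def by blast
  then show ?thesis
    using assms unfolding decomposes_def by (auto intro: pairwise_subset)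
qed

lemma has_decomposition_Un:
  assumes "has_decomposition q r G1" "has_decomposition q r G2" "G1 \<inter> G2 = {}"
  shows "has_decomposition q r (G1 \<union> G2)"
proof -
  obtain \<D>1 \<D>2 where \<D>: "decomposes q r \<D>1 G1" "decomposes q r \<D>2 G2"
    using assms(1,2) unfolding has_decomposition_iff by blast
  then have "pairwise disjnt (\<D>1 \<union> \<D>2)"
    using assms(3) unfolding decomposes_def by (simp add: disjoint_union)
  then have "decomposes q r (\<D>1 \<union> \<D>2) (G1 \<union> G2)"
    using \<D> unfolding decomposes_def by auto
  then show ?thesis unfolding has_decomposition_iff by blast
qed

lemma is_clique_image:
  assumes "is_clique q r S" "inj_on \<phi> X" "vertices S \<subseteq> X" "0 < r" "r \<le> q"
  shows "is_clique q r (image \<phi> ` S)"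
proof -
  obtain V where V: "finite V" "card V = q" "S = complete_rgraph r V"
    using assms(1) unfolding is_clique_def by blast
  then have "V \<subseteq> X"
    using vertices_complete_rgraph[OF V(1) assms(4)] assms(3,5) by simp
  then have "inj_on \<phi> V" using assms(2) by (rule inj_on_subset[rotated])
  then have "image \<phi> ` S = complete_rgraph r (\<phi> ` V)" "card (\<phi> ` V) = q"
    using complete_rgraph_image[of \<phi> V r] card_image[of \<phi> V] V(2,3) by simp_all
  then show ?thesis
    unfolding is_clique_def using V(1) by blast
qed

lemma has_decomposition_image:
  assumes "has_decomposition q r G" "inj_on \<phi> X" "vertices G \<subseteq> X" "0 < r" "r \<le> q"
  shows "has_decomposition q r (image \<phi> ` G)"
proof -
  obtain \<D> where \<D>: "decomposes q r \<D> G"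
    using assms(1) unfolding has_decomposition_iff by blast
  have inj_Pow: "inj_on (image \<phi>) (Pow X)"
    using assms(2) by (rule inj_on_image_Pow)
  have sub_Pow: "S \<subseteq> Pow X" if "S \<in> \<D>" for S
  proof -
    have "S \<subseteq> G" using that \<D> unfolding decomposes_def by blast
    then show ?thesis using assms(3) unfolding vertices_def by blast
  qed
  have "is_clique q r (image \<phi> ` S)" if "S \<in> \<D>" for S
  proof (rule is_clique_image[OF _ assms(2) _ assms(4,5)])
    show "is_clique q r S" using that \<D> unfolding decomposes_def by blast
    show "vertices S \<subseteq> X" using sub_Pow[OF that] unfolding vertices_def by blast
  qed
  moreover have "pairwise disjnt ((\<lambda>S. image \<phi> ` S) ` \<D>)"
  proof (rule pairwise_imageI)
    fix S T assume "S \<in> \<D>" "T \<in> \<D>" "S \<noteq> T" "image \<phi> ` S \<noteq> image \<phi> ` T"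
    then have "S \<inter> T = {}"
      using \<D> unfolding decomposes_def pairwise_def disjnt_def by blast
    then show "disjnt (image \<phi> ` S) (image \<phi> ` T)"
      using inj_on_image_Int[OF inj_Pow sub_Pow[OF \<open>S \<in> \<D>\<close>] sub_Pow[OF \<open>T \<in> \<D>\<close>]]
      unfolding disjnt_def by simp
  qed
  moreover have "\<Union>((\<lambda>S. image \<phi> ` S) ` \<D>) = image \<phi> ` G"
    using \<D> unfolding decomposes_def by blast
  ultimately show ?thesis
    unfolding has_decomposition_iff decomposes_def by blast
qed

lemma is_hinge_image:
  assumes hinge: "is_hinge q r S S' e H"
    and inj: "inj_on \<phi> X" and vert: "vertices (S \<union> S' \<union> H) \<subseteq> X" "e \<subseteq> X"
    and "0 < r" "r \<le> q"
  shows "is_hinge q r (image \<phi> ` S) (image \<phi> ` S') (\<phi> ` e) (image \<phi> ` H)"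
proof -
  have inj_Pow: "inj_on (image \<phi>) (Pow X)"
    using inj by (rule inj_on_image_Pow)
  have Pow: "S \<subseteq> Pow X" "S' \<subseteq> Pow X" "H \<subseteq> Pow X"
    using vert(1) unfolding vertices_def by auto
  have "finite (\<phi> ` f) \<and> card (\<phi> ` f) = r" if "f \<in> H" for f
  proof -
    have "inj_on \<phi> f" using inj Pow(3) that by (blast intro: inj_on_subset)
    then show ?thesis using hinge that unfolding is_hinge_def r_graph_def by (simp add: card_image)
  qed
  then have "r_graph r (image \<phi> ` H)"
    using hinge unfolding is_hinge_def r_graph_def by auto
  moreover have "image \<phi> ` H \<inter> (image \<phi> ` S \<union> image \<phi> ` S') = {}"
    using hinge inj_on_image_Int[OF inj_Pow Pow(3), of "S \<union> S'"] Pow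
    unfolding is_hinge_def by (simp add: image_Un)
  moreover have "has_decomposition q r (image \<phi> ` H \<union> (image \<phi> ` T - {\<phi> ` e}))"
    if "T \<subseteq> Pow X" "has_decomposition q r (H \<union> (T - {e}))" for T
  proof -
    have "image \<phi> ` (T - {e}) = image \<phi> ` T - {\<phi> ` e}"
      using inj_on_image_set_diff[OF inj_Pow, of T "{e}"] that(1) vert(2) by auto
    moreover have "vertices (H \<union> (T - {e})) \<subseteq> X"
      using that(1) Pow(3) unfolding vertices_def by blast
    ultimately show ?thesis
      using has_decomposition_image[OF that(2) inj _ \<open>0 < r\<close> \<open>r \<le> q\<close>] by (simp add: image_Un)
  qed
  ultimately show ?thesis
    using hinge Pow unfolding is_hinge_def by blast
qed

lemma is_hinge_commute: "is_hinge q r S S' e H \<longleftrightarrow> is_hinge q r S' S e H"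
  unfolding is_hinge_def by blast

section \<open>Fresh vertices\<close>

lemma obtain_fresh_set:
  assumes "infinite (UNIV :: 'a set)" "finite A"
  obtains Z :: "'a set" where "finite Z" "card Z = n" "Z \<inter> A = {}"
proof -
  have "infinite (UNIV - A)"
    using assms by (simp add: Diff_infinite_finite)
  then obtain Z where "finite Z" "card Z = n" "Z \<subseteq> UNIV - A"
    using infinite_arbitrarily_large by blast
  then show ?thesis using that by blast
qed

lemma obtain_bij_betw_extension:
  assumes f: "bij_betw f A C" and "finite B" "finite D" "card B = card D"
    and disj: "A \<inter> B = {}" "C \<inter> D = {}"
  obtains h where "bij_betw h (A \<union> B) (C \<union> D)" "\<forall>x\<in>A. h x = f x" "h ` B = D"
proof -
  obtain g where g: "bij_betw g B D"
    using finite_same_card_bij assms(2-4) by blast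
  let ?h = "\<lambda>x. if x \<in> A then f x else g x"
  have "?h ` B = g ` B"
    using disj(1) by (auto intro: image_cong)
  then show ?thesis
    using that bij_betw_disjoint_Un[OF f g disj] bij_betw_imp_surj_on[OF g] by auto
qed

lemma obtain_bij_betw_onto_two_sets:
  assumes fin: "finite X0" "finite X1" "finite U0" "finite U1"
    and card: "card X0 = card U0" "card X1 = card U1" "card (X0 \<inter> X1) = card (U0 \<inter> U1)"
  obtains f where "bij_betw f (X0 \<union> X1) (U0 \<union> U1)" "f ` X0 = U0" "f ` X1 = U1"
proof -
  obtain f0 where f0: "bij_betw f0 (X0 \<inter> X1) (U0 \<inter> U1)"
    using finite_same_card_bij fin card(3) by blast
  have card01: "card (X0 - X1) = card (U0 - U1)"
    using fin card by (simp add: card_Diff_subset_Int)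
  obtain f1 where f1: "bij_betw f1 (X0 \<inter> X1 \<union> (X0 - X1)) (U0 \<inter> U1 \<union> (U0 - U1))"
    "\<forall>x\<in>X0 \<inter> X1. f1 x = f0 x" "f1 ` (X0 - X1) = U0 - U1"
    by (rule obtain_bij_betw_extension[OF f0 _ _ card01]) (use fin in auto)
  have f1_X0: "bij_betw f1 X0 U0"
    using f1(1) by (simp add: Int_Diff_Un)
  have "f1 ` (X0 \<inter> X1) = f0 ` (X0 \<inter> X1)"
    using f1(2) by (intro image_cong) auto
  then have f1_Int: "f1 ` (X0 \<inter> X1) = U0 \<inter> U1"
    using bij_betw_imp_surj_on[OF f0] by simp
  have card10: "card (X1 - X0) = card (U1 - U0)"
    using fin card by (simp add: card_Diff_subset_Int Int_commute[of X1] Int_commute[of U1])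
  obtain f2 where f2: "bij_betw f2 (X0 \<union> (X1 - X0)) (U0 \<union> (U1 - U0))"
    "\<forall>x\<in>X0. f2 x = f1 x" "f2 ` (X1 - X0) = U1 - U0"
    by (rule obtain_bij_betw_extension[OF f1_X0 _ _ card10]) (use fin in auto)
  have "f2 ` X0 = f1 ` X0" "f2 ` (X0 \<inter> X1) = f1 ` (X0 \<inter> X1)"
    using f2(2) by (auto intro: image_cong)
  then have f2_X0: "f2 ` X0 = U0" and f2_Int: "f2 ` (X0 \<inter> X1) = U0 \<inter> U1"
    using bij_betw_imp_surj_on[OF f1_X0] f1_Int by simp_all
  have "f2 ` X1 = f2 ` (X0 \<inter> X1 \<union> (X1 - X0))"
    by (metis Int_Diff_Un Int_commute)
  also have "\<dots> = U1"
    using f2_Int f2(3) by (auto simp: image_Un)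
  finally show ?thesis
    using that f2(1) f2_X0 by simp
qed

lemma obtain_inj_on_onto_two_sets:
  fixes X0 X1 :: "'a set" and U0 U1 :: "'b set"
  assumes "infinite (UNIV :: 'b set)" "finite G" "X0 \<union> X1 \<subseteq> G" "finite W"
    and "finite U0" "finite U1"
    and "card X0 = card U0" "card X1 = card U1" "card (X0 \<inter> X1) = card (U0 \<inter> U1)"
  obtains \<phi> where "inj_on \<phi> G" "\<phi> ` X0 = U0" "\<phi> ` X1 = U1" "\<phi> ` (G - (X0 \<union> X1)) \<inter> W = {}"
proof -
  have "finite X0" "finite X1" using assms(2,3) finite_subset by auto
  then obtain f where f: "bij_betw f (X0 \<union> X1) (U0 \<union> U1)" "f ` X0 = U0" "f ` X1 = U1"
    using obtain_bij_betw_onto_two_sets assms(5-9) by metis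
  have "finite (W \<union> U0 \<union> U1)" using assms(4-6) by simp
  then obtain F where F: "finite F" "card F = card (G - (X0 \<union> X1))" "F \<inter> (W \<union> U0 \<union> U1) = {}"
    by (rule obtain_fresh_set[OF assms(1)])
  obtain \<phi> where \<phi>: "bij_betw \<phi> (X0 \<union> X1 \<union> (G - (X0 \<union> X1))) (U0 \<union> U1 \<union> F)"
    "\<forall>x\<in>X0 \<union> X1. \<phi> x = f x" "\<phi> ` (G - (X0 \<union> X1)) = F"
    by (rule obtain_bij_betw_extension[OF f(1) _ F(1) F(2)[symmetric]]) (use assms(2) F(3) in auto)
  show ?thesis
  proof
    have "X0 \<union> X1 \<union> (G - (X0 \<union> X1)) = G"
      using assms(3) by blast
    then show "inj_on \<phi> G"
      using bij_betw_imp_inj_on[OF \<phi>(1)] by simp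
    have "\<phi> ` X0 = f ` X0" "\<phi> ` X1 = f ` X1"
      using \<phi>(2) by (auto intro: image_cong)
    then show "\<phi> ` X0 = U0" "\<phi> ` X1 = U1"
      using f(2,3) by simp_all
    show "\<phi> ` (G - (X0 \<union> X1)) \<inter> W = {}"
      using \<phi>(3) F(3) by blast
  qed
qed

section \<open>Polynomial interpolation modulo a prime\<close>

lemma eq_if_dvd_diff_int:
  fixes x y m :: int
  assumes "x \<in> {0..<m}" "y \<in> {0..<m}" "m dvd x - y"
  shows "x = y"
proof (rule ccontr)
  assume "x \<noteq> y"
  then have "\<bar>m\<bar> \<le> \<bar>x - y\<bar>"
    using dvd_imp_le_int[OF _ assms(3)] by simp
  then show False using assms(1,2) by auto
qed

lemma prime_dvd_coeff_if_roots_mod: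
  fixes P :: "int poly"
  assumes "prime p" "finite J" "J \<subseteq> {0..<int p}" "degree P < card J"
    "\<forall>j\<in>J. int p dvd poly P j"
  shows "int p dvd coeff P i"
  using assms(2-)
proof (induction J arbitrary: P i rule: finite_induct)
  case empty
  then show ?case by simp
next
  case (insert a J)
  have root_a: "int p dvd poly P a" using insert.prems by simp
  show ?case
  proof (cases "degree P = 0")
    case True
    then obtain c where "P = [:c:]" by (metis degree_0_id)
    then show ?thesis using root_a by (cases i) auto
  next
    case False
    define Q where "Q = synthetic_div P a"
    have P_eq: "P = [:-a, 1:] * Q + [:poly P a:]"
      unfolding Q_def by (rule synthetic_div_correct'[symmetric])
    have "degree Q < card J"
      using insert.prems(2) insert.hyps False by (simp add: Q_def degree_synthetic_div)
    moreover have "\<forall>j\<in>J. int p dvd poly Q j"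
    proof
      fix j assume j: "j \<in> J"
      have "poly P j = (j - a) * poly Q j + poly P a"
        by (subst P_eq) (simp add: algebra_simps)
      then have "int p dvd (j - a) * poly Q j"
        using insert.prems(3) j root_a by (metis insert_iff add_diff_cancel_right' dvd_diff)
      moreover have "\<not> int p dvd (j - a)"
        using eq_if_dvd_diff_int[of j "int p" a] insert.prems(1) insert.hyps(2) j by auto
      moreover have "prime (int p)" using \<open>prime p\<close> by simp
      ultimately show "int p dvd poly Q j" using prime_dvd_mult_iff by blast
    qed
    ultimately have IH: "int p dvd coeff Q k" for k
      using insert.IH insert.prems(1) by auto
    have "coeff P i = - a * coeff Q i + (case i of 0 \<Rightarrow> poly P a | Suc k \<Rightarrow> coeff Q k)"
      by (subst P_eq) (simp add: coeff_pCons split: nat.split)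
    then show ?thesis using IH root_a by (simp split: nat.split)
  qed
qed

definition shifted_eval :: "nat \<Rightarrow> nat \<Rightarrow> (nat \<Rightarrow> nat) \<Rightarrow> (nat \<Rightarrow> nat) \<Rightarrow> nat \<Rightarrow> nat" where
  "shifted_eval p r t c j = ((\<Sum>i<r. c i * j ^ i) + t j) mod p"

definition coeff_vectors :: "nat \<Rightarrow> nat \<Rightarrow> (nat \<Rightarrow> nat) set" where
  "coeff_vectors p r = {..<r} \<rightarrow>\<^sub>E {..<p}"

lemma dvd_poly_if_shifted_eval_eq:
  assumes "shifted_eval p r t c j = shifted_eval p r t c' j"
  shows "int p dvd poly (\<Sum>k<r. monom (int (c k) - int (c' k)) k) (int j)"
proof -
  define A where "A = (\<Sum>k<r. c k * j ^ k)"
  define B where "B = (\<Sum>k<r. c' k * j ^ k)"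
  have "(A + t j) mod p = (B + t j) mod p"
    using assms unfolding shifted_eval_def A_def B_def .
  then have "(int A + int (t j)) mod int p = (int B + int (t j)) mod int p"
    by (metis of_nat_add of_nat_mod)
  then have "int p dvd (int A + int (t j)) - (int B + int (t j))"
    using mod_eq_dvd_iff by blast
  moreover have "poly (\<Sum>k<r. monom (int (c k) - int (c' k)) k) (int j) = int A - int B"
    by (simp add: A_def B_def poly_sum poly_monom sum_subtractf[symmetric] left_diff_distrib)
  ultimately show ?thesis by simp
qed

lemma shifted_eval_inj:
  assumes "prime p" "J \<subseteq> {..<p}" "card J = r"
    and c: "c \<in> coeff_vectors p r" and c': "c' \<in> coeff_vectors p r"
    and agree: "\<forall>j\<in>J. shifted_eval p r t c j = shifted_eval p r t c' j"
  shows "c = c'"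
proof
  fix i
  define P where "P = (\<Sum>k<r. monom (int (c k) - int (c' k)) k)"
  have coeff_P: "coeff P k = (if k < r then int (c k) - int (c' k) else 0)" for k
    unfolding P_def by (simp add: coeff_sum)
  have roots: "\<forall>j\<in>int ` J. int p dvd poly P j"
    using agree unfolding P_def by (auto intro: dvd_poly_if_shifted_eval_eq)
  show "c i = c' i"
  proof (cases "i < r")
    case True
    have "degree P \<le> r - 1"
      by (rule degree_le) (use coeff_P in auto)
    then have "degree P < card (int ` J)"
      using True \<open>card J = r\<close> by (simp add: card_image)
    moreover have "int ` J \<subseteq> {0..<int p}" "finite (int ` J)"
      using \<open>J \<subseteq> {..<p}\<close> finite_subset by auto
    ultimately have "int p dvd coeff P i"
      using prime_dvd_coeff_if_roots_mod[OF \<open>prime p\<close> _ _ _ roots] by blast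
    then have "int p dvd int (c i) - int (c' i)"
      using True coeff_P by simp
    moreover have "c i < p" "c' i < p"
      using True PiE_mem[OF c[unfolded coeff_vectors_def]] PiE_mem[OF c'[unfolded coeff_vectors_def]]
      by auto
    ultimately show ?thesis using eq_if_dvd_diff_int[of "int (c i)" "int p" "int (c' i)"] by simp
  next
    case False
    then show ?thesis
      using PiE_arb[OF c[unfolded coeff_vectors_def]] PiE_arb[OF c'[unfolded coeff_vectors_def]] by simp
  qed
qed

lemma shifted_eval_bij_betw:
  assumes "prime p" "J \<subseteq> {..<p}" "card J = r"
  shows "bij_betw (\<lambda>c. restrict (shifted_eval p r t c) J) (coeff_vectors p r) (J \<rightarrow>\<^sub>E {..<p})"
    (is "bij_betw ?F _ _")
proof -
  have "finite J" using assms(2) finite_subset by blast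
  have inj: "inj_on ?F (coeff_vectors p r)"
  proof (rule inj_onI)
    fix c c' assume "c \<in> coeff_vectors p r" "c' \<in> coeff_vectors p r" "?F c = ?F c'"
    moreover have "shifted_eval p r t c j = shifted_eval p r t c' j" if "j \<in> J" for j
      using fun_cong[OF \<open>?F c = ?F c'\<close>, of j] that by simp
    ultimately show "c = c'" using shifted_eval_inj[OF assms] by blast
  qed
  moreover have "?F ` coeff_vectors p r \<subseteq> J \<rightarrow>\<^sub>E {..<p}"
    using prime_gt_0_nat[OF assms(1)] by (auto simp: shifted_eval_def)
  moreover have "card (?F ` coeff_vectors p r) = card (J \<rightarrow>\<^sub>E {..<p})"
  proof -
    have "card (?F ` coeff_vectors p r) = card (coeff_vectors p r)"
      by (rule card_image[OF inj])
    also have "\<dots> = card (J \<rightarrow>\<^sub>E {..<p})"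
      using assms(3) \<open>finite J\<close> by (simp add: card_PiE coeff_vectors_def)
    finally show ?thesis .
  qed
  moreover have "finite (J \<rightarrow>\<^sub>E {..<p})"
    using \<open>finite J\<close> by (simp add: finite_PiE)
  ultimately show ?thesis
    unfolding bij_betw_def using card_subset_eq by blast
qed

section \<open>A design on the partial transversals of a grid\<close>

definition partial_transversals :: "nat \<Rightarrow> nat \<Rightarrow> nat \<Rightarrow> (nat \<times> nat) set set" where
  "partial_transversals p q r = {f. f \<subseteq> {..<q} \<times> {..<p} \<and> card f = r \<and> inj_on fst f}"

lemma r_graph_partial_transversals: "r_graph r (partial_transversals p q r)"
proof -
  have "partial_transversals p q r \<subseteq> Pow ({..<q} \<times> {..<p})"
    unfolding partial_transversals_def by auto
  then show ?thesis
    unfolding r_graph_def partial_transversals_def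
    by (auto intro: finite_subset[of _ "{..<q} \<times> {..<p}"] finite_subset[of _ "Pow _"])
qed

definition block :: "nat \<Rightarrow> nat \<Rightarrow> nat \<Rightarrow> (nat \<Rightarrow> nat) \<Rightarrow> (nat \<Rightarrow> nat) \<Rightarrow> (nat \<times> nat) set" where
  "block p q r t c = (\<lambda>j. (j, shifted_eval p r t c j)) ` {..<q}"

definition block_design :: "nat \<Rightarrow> nat \<Rightarrow> nat \<Rightarrow> (nat \<Rightarrow> nat) \<Rightarrow> (nat \<times> nat) set set set" where
  "block_design p q r t = (\<lambda>c. complete_rgraph r (block p q r t c)) ` coeff_vectors p r"

lemma mem_block_iff: "x \<in> block p q r t c \<longleftrightarrow> fst x < q \<and> snd x = shifted_eval p r t c (fst x)"
  unfolding block_def by (cases x) auto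

lemma card_block: "card (block p q r t c) = q"
  unfolding block_def by (subst card_image) (auto intro: inj_onI)

lemma finite_block: "finite (block p q r t c)"
  unfolding block_def by simp

lemma block_subset_grid: "0 < p \<Longrightarrow> block p q r t c \<subseteq> {..<q} \<times> {..<p}"
  by (auto simp: mem_block_iff shifted_eval_def)

lemma complete_rgraph_block_subset:
  assumes "0 < p"
  shows "complete_rgraph r (block p q r t c) \<subseteq> partial_transversals p q r"
proof
  fix f assume "f \<in> complete_rgraph r (block p q r t c)"
  then have "f \<subseteq> block p q r t c" "card f = r" unfolding complete_rgraph_def by auto
  moreover have "inj_on fst (block p q r t c)"
    by (auto simp: inj_on_def mem_block_iff intro: prod_eqI)
  ultimately show "f \<in> partial_transversals p q r"
    using block_subset_grid[OF assms] unfolding partial_transversals_def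
    by (blast intro: inj_on_subset)
qed

lemma ex1_block_containing:
  assumes "prime p" "q \<le> p" "f \<in> partial_transversals p q r"
  shows "\<exists>!c. c \<in> coeff_vectors p r \<and> f \<subseteq> block p q r t c"
proof -
  have f: "f \<subseteq> {..<q} \<times> {..<p}" "card f = r" "inj_on fst f"
    using assms(3) unfolding partial_transversals_def by auto
  define J where "J = fst ` f"
  have J: "J \<subseteq> {..<p}" "card J = r"
    using f assms(2) by (auto simp: J_def card_image)
  define v where "v = restrict (\<lambda>j. snd (the_inv_into f fst j)) J"
  have v_fst: "v (fst x) = snd x" if "x \<in> f" for x
    using that f(3) by (simp add: v_def J_def the_inv_into_f_f)
  have bij: "bij_betw (\<lambda>c. restrict (shifted_eval p r t c) J) (coeff_vectors p r) (J \<rightarrow>\<^sub>E {..<p})"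
    by (rule shifted_eval_bij_betw[OF assms(1) J])
  have "v \<in> J \<rightarrow>\<^sub>E {..<p}"
    using f(1) v_fst by (auto simp: v_def J_def)
  then have "v \<in> (\<lambda>c. restrict (shifted_eval p r t c) J) ` coeff_vectors p r"
    using bij_betw_imp_surj_on[OF bij] by simp
  then obtain c where c: "c \<in> coeff_vectors p r" "restrict (shifted_eval p r t c) J = v"
    by blast
  have block_iff: "f \<subseteq> block p q r t c' \<longleftrightarrow> restrict (shifted_eval p r t c') J = v" for c'
  proof
    assume "f \<subseteq> block p q r t c'"
    then show "restrict (shifted_eval p r t c') J = v"
      by (auto simp: fun_eq_iff J_def v_def mem_block_iff v_fst[symmetric] subset_iff)
  next
    assume "restrict (shifted_eval p r t c') J = v"
    then show "f \<subseteq> block p q r t c'"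
      using f(1) v_fst by (force simp: fun_eq_iff J_def mem_block_iff)
  qed
  show ?thesis
  proof (rule ex1I[of _ c])
    show "c \<in> coeff_vectors p r \<and> f \<subseteq> block p q r t c"
      using c block_iff by blast
  next
    fix c' assume "c' \<in> coeff_vectors p r \<and> f \<subseteq> block p q r t c'"
    then show "c' = c"
      using c block_iff inj_onD[OF bij_betw_imp_inj_on[OF bij]] by metis
  qed
qed

lemma pairwise_disjnt_block_design:
  assumes "prime p" "q \<le> p"
  shows "pairwise disjnt (block_design p q r t)"
proof (rule pairwiseI)
  fix S S' assume "S \<in> block_design p q r t" "S' \<in> block_design p q r t" "S \<noteq> S'"
  then obtain c c' where c: "c \<in> coeff_vectors p r" "S = complete_rgraph r (block p q r t c)"
    and c': "c' \<in> coeff_vectors p r" "S' = complete_rgraph r (block p q r t c')"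
    unfolding block_design_def by auto
  show "disjnt S S'"
    unfolding disjnt_iff
  proof (intro allI notI, elim conjE)
    fix f assume "f \<in> S" "f \<in> S'"
    then have "f \<in> partial_transversals p q r"
      using c complete_rgraph_block_subset[OF prime_gt_0_nat[OF assms(1)]] by blast
    then have "\<exists>!c. c \<in> coeff_vectors p r \<and> f \<subseteq> block p q r t c"
      by (rule ex1_block_containing[OF assms])
    moreover have "f \<subseteq> block p q r t c" "f \<subseteq> block p q r t c'"
      using \<open>f \<in> S\<close> \<open>f \<in> S'\<close> c(2) c'(2) unfolding complete_rgraph_def by auto
    ultimately have "c = c'"
      using c(1) c'(1) unfolding Ex1_def by blast
    then show False using c c' \<open>S \<noteq> S'\<close> by simp
  qed
qed

lemma block_design_decomposes:
  assumes "prime p" "q \<le> p"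
  shows "decomposes q r (block_design p q r t) (partial_transversals p q r)"
  unfolding decomposes_def
proof (intro conjI)
  have "0 < p" using assms(1) prime_gt_0_nat by blast
  show "\<forall>S\<in>block_design p q r t. is_clique q r S"
    unfolding block_design_def is_clique_def
    using card_block finite_block by (auto intro!: exI[of _ "block p q r t _"])
  show "pairwise disjnt (block_design p q r t)"
    by (rule pairwise_disjnt_block_design[OF assms])
  show "\<Union>(block_design p q r t) = partial_transversals p q r"
  proof
    show "\<Union>(block_design p q r t) \<subseteq> partial_transversals p q r"
      unfolding block_design_def using complete_rgraph_block_subset[OF \<open>0 < p\<close>] by blast
  next
    show "partial_transversals p q r \<subseteq> \<Union>(block_design p q r t)"
    proof
      fix f assume f: "f \<in> partial_transversals p q r"
      then obtain c where "c \<in> coeff_vectors p r" "f \<subseteq> block p q r t c"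
        using ex1_block_containing[OF assms f, of t] by blast
      moreover have "card f = r" using f unfolding partial_transversals_def by simp
      ultimately show "f \<in> \<Union>(block_design p q r t)"
        unfolding block_design_def complete_rgraph_def by blast
    qed
  qed
qed

section \<open>Hinges\<close>

(* The blocks of the zero polynomial for the shifts 0 and [r <= j]. *)
definition zero_block :: "nat \<Rightarrow> (nat \<times> nat) set" where
  "zero_block q = (\<lambda>j. (j, 0)) ` {..<q}"

definition step_block :: "nat \<Rightarrow> nat \<Rightarrow> (nat \<times> nat) set" where
  "step_block q r = (\<lambda>j. (j, if j < r then 0 else 1)) ` {..<q}"

lemma card_zero_block: "card (zero_block q) = q"
  unfolding zero_block_def by (simp add: card_image inj_on_def)

lemma card_step_block: "card (step_block q r) = q"
  unfolding step_block_def by (simp add: card_image inj_on_def)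

lemma card_zero_block_Int_step_block:
  assumes "r \<le> q"
  shows "card (zero_block q \<inter> step_block q r) = r"
proof -
  have "zero_block q \<inter> step_block q r = (\<lambda>j. (j, 0)) ` {..<r}"
    using assms unfolding zero_block_def step_block_def by (auto split: if_splits)
  then show ?thesis by (simp add: card_image inj_on_def)
qed

lemma zero_block_Un_step_block_subset:
  "1 < p \<Longrightarrow> zero_block q \<union> step_block q r \<subseteq> {..<q} \<times> {..<p}"
  unfolding zero_block_def step_block_def by auto

lemma is_hinge_partial_transversals:
  assumes "prime p" "r \<le> q" "q \<le> p"
  shows "is_hinge q r (complete_rgraph r (zero_block q)) (complete_rgraph r (step_block q r))
           (zero_block q \<inter> step_block q r)
           (partial_transversals p q r - complete_rgraph r (zero_block q)
              - complete_rgraph r (step_block q r))"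
proof -
  define T where "T = partial_transversals p q r"
  define K0 where "K0 = complete_rgraph r (zero_block q)"
  define K1 where "K1 = complete_rgraph r (step_block q r)"
  define t0 :: "nat \<Rightarrow> nat" where "t0 = (\<lambda>_. 0)"
  define t1 :: "nat \<Rightarrow> nat" where "t1 = (\<lambda>j. if j < r then 0 else 1)"
  define zero :: "nat \<Rightarrow> nat" where "zero = restrict (\<lambda>_. 0) {..<r}"
  have "1 < p" using assms(1) prime_gt_1_nat by blast
  have zero: "zero \<in> coeff_vectors p r"
    using \<open>1 < p\<close> by (auto simp: coeff_vectors_def zero_def)
  have block_zero: "block p q r t zero = (\<lambda>j. (j, t j mod p)) ` {..<q}" for t
    unfolding block_def shifted_eval_def zero_def by simp
  have "zero_block q = block p q r t0 zero" "step_block q r = block p q r t1 zero"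
    unfolding zero_block_def step_block_def block_zero t0_def t1_def using \<open>1 < p\<close> by auto
  then have K0: "K0 \<in> block_design p q r t0" and K1: "K1 \<in> block_design p q r t1"
    unfolding block_design_def K0_def K1_def using zero by auto
  have dec0: "decomposes q r (block_design p q r t0) T"
    and dec1: "decomposes q r (block_design p q r t1) T"
    unfolding T_def using block_design_decomposes[OF assms(1,3)] by auto
  have "K0 \<subseteq> T" "K1 \<subseteq> T"
    using dec0 dec1 K0 K1 unfolding decomposes_def by auto
  moreover have "K0 \<inter> K1 = {zero_block q \<inter> step_block q r}"
    using card_zero_block_Int_step_block[OF assms(2)]
    by (simp add: K0_def K1_def complete_rgraph_Int[symmetric] complete_rgraph_card_eq
        zero_block_def)
  ultimately have "T - K0 - K1 \<union> (K0 - {zero_block q \<inter> step_block q r}) = T - K1"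
    "T - K0 - K1 \<union> (K1 - {zero_block q \<inter> step_block q r}) = T - K0"
    by blast+
  moreover have "has_decomposition q r (T - K1)" "has_decomposition q r (T - K0)"
    using decomposes_Diff[OF dec1 K1] decomposes_Diff[OF dec0 K0]
    unfolding has_decomposition_iff by blast+
  moreover have "r_graph r (T - K0 - K1)"
    using r_graph_partial_transversals[of r p q] unfolding T_def r_graph_def by auto
  ultimately show ?thesis
    unfolding is_hinge_def T_def K0_def K1_def by auto
qed

lemma is_hinge_image_complete_rgraph:
  assumes hinge: "is_hinge q r (complete_rgraph r X0) (complete_rgraph r X1) (X0 \<inter> X1) H"
    and inj: "inj_on \<phi> G" and sub: "X0 \<union> X1 \<subseteq> G" "vertices H \<subseteq> G" and "0 < r" "r \<le> q"
  shows "is_hinge q r (complete_rgraph r (\<phi> ` X0)) (complete_rgraph r (\<phi> ` X1)) (\<phi> ` X0 \<inter> \<phi> ` X1)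
    (image \<phi> ` H)"
proof -
  have "vertices (complete_rgraph r X0 \<union> complete_rgraph r X1 \<union> H) \<subseteq> G"
    using sub vertices_complete_rgraph_subset[of r X0] vertices_complete_rgraph_subset[of r X1]
    by (auto simp: vertices_def)
  then have "is_hinge q r (image \<phi> ` complete_rgraph r X0) (image \<phi> ` complete_rgraph r X1)
      (\<phi> ` (X0 \<inter> X1)) (image \<phi> ` H)"
    using is_hinge_image[OF hinge inj _ _ \<open>0 < r\<close> \<open>r \<le> q\<close>] sub(1) by blast
  moreover have "inj_on \<phi> X0" "inj_on \<phi> X1"
    using inj_on_subset[OF inj] sub(1) by blast+
  moreover have "\<phi> ` (X0 \<inter> X1) = \<phi> ` X0 \<inter> \<phi> ` X1"
    using inj_on_image_Int[OF inj] sub(1) by blast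
  ultimately show ?thesis
    by (simp add: complete_rgraph_image)
qed

lemma exists_hinge_avoiding:
  fixes U1 U2 :: "'a set"
  assumes "infinite (UNIV :: 'a set)" "0 < r" "r \<le> q" "finite W"
    and "finite U1" "finite U2" "card U1 = q" "card U2 = q" "card (U1 \<inter> U2) = r"
  shows "\<exists>H. is_hinge q r (complete_rgraph r U1) (complete_rgraph r U2) (U1 \<inter> U2) H
           \<and> vertices H \<inter> W \<subseteq> U1 \<union> U2"
proof -
  obtain p :: nat where "prime p" "q < p" using bigger_prime by blast
  then have "1 < p" using prime_gt_1_nat by blast
  define G where "G = {..<q} \<times> {..<p}"
  define X0 where "X0 = zero_block q"
  define X1 where "X1 = step_block q r"
  define H0 where "H0 = partial_transversals p q r - complete_rgraph r X0 - complete_rgraph r X1"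
  have hinge: "is_hinge q r (complete_rgraph r X0) (complete_rgraph r X1) (X0 \<inter> X1) H0"
    unfolding X0_def X1_def H0_def
    using is_hinge_partial_transversals \<open>prime p\<close> assms(3) \<open>q < p\<close> by simp
  have "X0 \<union> X1 \<subseteq> G"
    unfolding X0_def X1_def G_def using zero_block_Un_step_block_subset[OF \<open>1 < p\<close>] .
  have "finite G" unfolding G_def by simp
  obtain \<phi> where \<phi>: "inj_on \<phi> G" "\<phi> ` X0 = U1" "\<phi> ` X1 = U2"
    "\<phi> ` (G - (X0 \<union> X1)) \<inter> W = {}"
    by (rule obtain_inj_on_onto_two_sets[OF assms(1) \<open>finite G\<close> \<open>X0 \<union> X1 \<subseteq> G\<close> assms(4-6)])
      (simp_all add: X0_def X1_def card_zero_block card_step_block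
        card_zero_block_Int_step_block assms(3,7-9))
  have "H0 \<subseteq> Pow G"
    unfolding H0_def G_def partial_transversals_def by auto
  then have "vertices H0 \<subseteq> G"
    unfolding vertices_def by blast
  then have "is_hinge q r (complete_rgraph r U1) (complete_rgraph r U2) (U1 \<inter> U2) (image \<phi> ` H0)"
    using is_hinge_image_complete_rgraph[OF hinge \<phi>(1) \<open>X0 \<union> X1 \<subseteq> G\<close> _ assms(2,3)] \<phi>(2,3)
    by simp
  moreover have "vertices (image \<phi> ` H0) \<subseteq> \<phi> ` X0 \<union> \<phi> ` X1 \<union> \<phi> ` (G - (X0 \<union> X1))"
    using \<open>vertices H0 \<subseteq> G\<close> unfolding vertices_def by blast
  ultimately show ?thesis
    using \<phi>(2-4) by blast
qed

lemma has_decomposition_hinge_chain: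
  assumes hinge: "is_hinge q r (complete_rgraph r V) (complete_rgraph r U) e H"
    and dec: "has_decomposition q r G"
    and e: "V \<inter> U = e" "finite e" "card e = r"
    and meet: "vertices (H \<union> (complete_rgraph r V - {e})) \<inter> vertices G \<subseteq> U"
  shows "has_decomposition q r (H \<union> (complete_rgraph r V - {e}) \<union> G)"
proof (rule has_decomposition_Un[OF _ dec])
  show "has_decomposition q r (H \<union> (complete_rgraph r V - {e}))"
    using hinge unfolding is_hinge_def by blast
  show "(H \<union> (complete_rgraph r V - {e})) \<inter> G = {}"
  proof (rule equals0I)
    fix f assume f: "f \<in> (H \<union> (complete_rgraph r V - {e})) \<inter> G"
    then have "f \<subseteq> U"
      using subset_vertices[of f G] subset_vertices[of f "H \<union> (complete_rgraph r V - {e})"] meet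
      by blast
    moreover have "card f = r"
      using f hinge unfolding is_hinge_def r_graph_def by (auto simp: mem_complete_rgraph_iff)
    ultimately have "f \<in> complete_rgraph r U"
      by (simp add: mem_complete_rgraph_iff)
    then have "f \<in> complete_rgraph r V - {e}"
      using f hinge unfolding is_hinge_def by blast
    then have "f \<subseteq> e" "card f = r" "f \<noteq> e"
      using \<open>f \<subseteq> U\<close> e(1) by (auto simp: mem_complete_rgraph_iff)
    then show False
      using card_subset_eq[OF e(2)] e(3) by metis
  qed
qed

lemma independent_in_hinge_chain:
  assumes H1: "is_hinge q r (complete_rgraph r V1) (complete_rgraph r U) e H1"
    and H2: "is_hinge q r (complete_rgraph r U) (complete_rgraph r V2) e H2"
    and e: "V1 \<inter> U = e" "U \<inter> V2 = e" "finite e" "card e = r"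
    and new_vertices: "vertices H1 \<inter> V2 \<subseteq> V1 \<union> U" "vertices H2 \<inter> V1 \<subseteq> U \<union> V2"
  shows "independent_in (V1 \<union> V2) (H1 \<union> (complete_rgraph r U - {e}) \<union> H2)"
  unfolding independent_in_def
proof (intro ballI notI)
  fix f assume f: "f \<in> H1 \<union> (complete_rgraph r U - {e}) \<union> H2" "f \<subseteq> V1 \<union> V2"
  have card_f: "card f = r"
    using f(1) H1 H2 unfolding is_hinge_def r_graph_def by (auto simp: mem_complete_rgraph_iff)
  consider "f \<in> H1" | "f \<in> complete_rgraph r U - {e}" | "f \<in> H2"
    using f(1) by blast
  then show False
  proof cases
    case 1
    then have "f \<subseteq> V1"
      using subset_vertices[OF 1] f(2) new_vertices(1) e(1,2) by blast
    then show False
      using 1 card_f H1 unfolding is_hinge_def by (auto simp: mem_complete_rgraph_iff)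
  next
    case 2
    then have "f \<subseteq> e" "f \<noteq> e"
      using f(2) e(1,2) by (auto simp: mem_complete_rgraph_iff)
    then show False
      using card_subset_eq[OF e(3)] card_f e(4) by metis
  next
    case 3
    then have "f \<subseteq> V2"
      using subset_vertices[OF 3] f(2) new_vertices(2) e(1,2) by blast
    then show False
      using 3 card_f H2 unfolding is_hinge_def by (auto simp: mem_complete_rgraph_iff)
  qed
qed

lemma independent_hinge_compose:
  assumes H1: "is_hinge q r (complete_rgraph r V1) (complete_rgraph r U) e H1"
    and H2: "is_hinge q r (complete_rgraph r U) (complete_rgraph r V2) e H2"
    and e: "V1 \<inter> U = e" "U \<inter> V2 = e" "V1 \<inter> V2 = e" "finite U" "card e = r"
    and new_vertices: "vertices H1 \<inter> V2 \<subseteq> V1 \<union> U"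
      "vertices H2 \<inter> (V1 \<union> vertices H1) \<subseteq> U \<union> V2"
  defines "H \<equiv> H1 \<union> (complete_rgraph r U - {e}) \<union> H2"
  shows "is_hinge q r (complete_rgraph r V1) (complete_rgraph r V2) e H
    \<and> independent_in (V1 \<union> V2) H"
proof -
  have "finite e" using e(1,4) by blast
  have indep: "independent_in (V1 \<union> V2) H"
    unfolding H_def using independent_in_hinge_chain[OF H1 H2 e(1,2) \<open>finite e\<close> e(5)] new_vertices
    by blast
  have vertices_side: "vertices (G \<union> (complete_rgraph r X - {e})) \<subseteq> vertices G \<union> X" for G X
    using vertices_complete_rgraph_subset[of r X] unfolding vertices_def by blast
  have "(vertices H1 \<union> V1) \<inter> (vertices H2 \<union> U) \<subseteq> U"
    "(vertices H2 \<union> V2) \<inter> (vertices H1 \<union> U) \<subseteq> U"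
    using new_vertices e(1-3) by blast+
  then have meet:
    "vertices (H1 \<union> (complete_rgraph r V1 - {e})) \<inter> vertices (H2 \<union> (complete_rgraph r U - {e})) \<subseteq> U"
    "vertices (H2 \<union> (complete_rgraph r V2 - {e})) \<inter> vertices (H1 \<union> (complete_rgraph r U - {e})) \<subseteq> U"
    using vertices_side[of H1 V1] vertices_side[of H2 U] vertices_side[of H2 V2] vertices_side[of H1 U]
    by blast+
  have "has_decomposition q r (H2 \<union> (complete_rgraph r U - {e}))"
    "has_decomposition q r (H1 \<union> (complete_rgraph r U - {e}))"
    "V2 \<inter> U = e"
    using H1 H2 e(2) unfolding is_hinge_def by blast+
  then have "has_decomposition q r (H1 \<union> (complete_rgraph r V1 - {e}) \<union> (H2 \<union> (complete_rgraph r U - {e})))"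
    "has_decomposition q r (H2 \<union> (complete_rgraph r V2 - {e}) \<union> (H1 \<union> (complete_rgraph r U - {e})))"
    using has_decomposition_hinge_chain[OF H1 _ e(1) \<open>finite e\<close> e(5) meet(1)]
      has_decomposition_hinge_chain[OF is_hinge_commute[THEN iffD1, OF H2] _ _ \<open>finite e\<close> e(5) meet(2)]
    by blast+
  moreover have "H \<union> (complete_rgraph r V1 - {e})
      = H1 \<union> (complete_rgraph r V1 - {e}) \<union> (H2 \<union> (complete_rgraph r U - {e}))"
    "H \<union> (complete_rgraph r V2 - {e})
      = H2 \<union> (complete_rgraph r V2 - {e}) \<union> (H1 \<union> (complete_rgraph r U - {e}))"
    unfolding H_def by blast+
  moreover have "r_graph r H"
    using H1 H2 r_graph_complete_rgraph[OF e(4)]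
    unfolding H_def is_hinge_def r_graph_def by auto
  moreover have "H \<inter> (complete_rgraph r V1 \<union> complete_rgraph r V2) = {}"
    using independent_in_subset[OF indep] vertices_complete_rgraph_subset[of r V1]
      vertices_complete_rgraph_subset[of r V2] independent_in_disjoint by blast
  ultimately show ?thesis
    using indep unfolding is_hinge_def by simp
qed

lemma obtain_intermediate_set:
  assumes "infinite (UNIV :: 'a set)" "finite V1" "finite V2" "V1 \<inter> V2 = e" "card e = r" "r \<le> q"
  obtains U :: "'a set" where "finite U" "card U = q" "V1 \<inter> U = e" "U \<inter> V2 = e"
proof -
  have "finite (V1 \<union> V2)" using assms(2,3) by simp
  then obtain Z where Z: "finite Z" "card Z = q - r" "Z \<inter> (V1 \<union> V2) = {}"
    by (rule obtain_fresh_set[OF assms(1)])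
  have "finite e" "e \<inter> Z = {}" using assms(2,4) Z(3) by auto
  then have "finite (e \<union> Z)" "card (e \<union> Z) = q" "V1 \<inter> (e \<union> Z) = e" "(e \<union> Z) \<inter> V2 = e"
    using Z assms(4-6) by (auto simp: card_Un_disjoint)
  then show ?thesis using that by blast
qed

lemma exists_independent_hinge:
  fixes V1 V2 :: "'a set"
  assumes "infinite (UNIV :: 'a set)" "0 < r" "r \<le> q"
    and V: "finite V1" "finite V2" "card V1 = q" "card V2 = q" "V1 \<inter> V2 = e" "card e = r"
  shows "\<exists>H. is_hinge q r (complete_rgraph r V1) (complete_rgraph r V2) e H
    \<and> independent_in (V1 \<union> V2) H"
proof -
  obtain U where U: "finite U" "card U = q" "V1 \<inter> U = e" "U \<inter> V2 = e"
    using obtain_intermediate_set[OF assms(1) V(1,2,5,6) assms(3)] by blast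
  then have "card (V1 \<inter> U) = r" "card (U \<inter> V2) = r"
    using V(6) by simp_all
  then obtain H1 where H1: "is_hinge q r (complete_rgraph r V1) (complete_rgraph r U) e H1"
    "vertices H1 \<inter> V2 \<subseteq> V1 \<union> U"
    using exists_hinge_avoiding[OF assms(1-3) V(2,1) U(1) V(3) U(2)] unfolding U(3) by blast
  have "finite (V1 \<union> vertices H1)"
    using V(1) H1(1) r_graph_finite_vertices[of r H1] unfolding is_hinge_def by simp
  then obtain H2 where H2: "is_hinge q r (complete_rgraph r U) (complete_rgraph r V2) e H2"
    "vertices H2 \<inter> (V1 \<union> vertices H1) \<subseteq> U \<union> V2"
    using exists_hinge_avoiding[OF assms(1-3) _ U(1) V(2) U(2) V(4) \<open>card (U \<inter> V2) = r\<close>]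
    unfolding U(4) by blast
  show ?thesis
    using independent_hinge_compose[OF H1(1) H2(1) U(3,4) V(5) U(1) V(6) H1(2) H2(2)] by blast
qed

theorem lemma2p5:
  fixes S1 S2 :: "'a set set" and e :: "'a set" and q r :: nat
  assumes "infinite (UNIV :: 'a set)"
    and "1 \<le> r" and "r < q"
    and "is_clique q r S1" and "is_clique q r S2"
    and "S1 \<inter> S2 = {e}"
  shows "\<exists>H. is_hinge q r S1 S2 e H \<and> independent_in (vertices S1 \<union> vertices S2) H"
proof -
  have "0 < r" "r \<le> q" using assms(2,3) by simp_all
  obtain V1 V2 where V1: "finite V1" "card V1 = q" "S1 = complete_rgraph r V1"
    and V2: "finite V2" "card V2 = q" "S2 = complete_rgraph r V2"
    using assms(4,5) unfolding is_clique_def by blast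
  have "finite (V1 \<inter> V2)" using V1(1) by simp
  moreover have "complete_rgraph r (V1 \<inter> V2) = {e}"
    using assms(6) V1(3) V2(3) by (simp add: complete_rgraph_Int)
  ultimately have "V1 \<inter> V2 = e" "card e = r"
    by (rule complete_rgraph_eq_singleton[OF _ \<open>0 < r\<close>])+
  then obtain H where "is_hinge q r S1 S2 e H" "independent_in (V1 \<union> V2) H"
    using exists_independent_hinge[OF assms(1) \<open>0 < r\<close> \<open>r \<le> q\<close> V1(1) V2(1) V1(2) V2(2)]
      V1(3) V2(3) by blast
  moreover have "vertices S1 \<union> vertices S2 \<subseteq> V1 \<union> V2"
    using vertices_complete_rgraph_subset[of r V1] vertices_complete_rgraph_subset[of r V2]
      V1(3) V2(3) by auto
  ultimately show ?thesis
    using independent_in_subset by blast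
qed

end
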